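(* For all integers $n\ge1$ and $m\ge0$, $\operatorname{diam}(Y_{n,m})=\operatorname{ecc}_{Z_{n,m}}(0)$, where $0$ is the all-zero vertex of $Z_{n,m}$.
   Context: For integers $n\ge1$, $m\ge0$, the Yoke graph $Y_{n,m}$ is the simple graph whose vertices are the tuples $v=(v_0,\dots,v_{m+1})$ with $v_0,v_{m+1}\in\mathbb{Z}_n$, $v_1,\dots,v_m\in\{0,1\}$ and $\sum_{i=0}^{m+1}v_i\equiv0\pmod n$. The dYoke graph $Z_{n,m}$ is defined identically except that $v_1,\dots,v_m\in\{-1,0,1\}$. In both graphs, two vertices $u,v$ are adjacent iff there is $0\le i\le m$ with $u_j=v_j$ for all $j\notin\{i,i+1\}$ and either ($u_i=v_i+1$, $u_{i+1}=v_{i+1}-1$) or ($u_i=v_i-1$, $u_{i+1}=v_{i+1}+1$), with the bucket entries (indices $0$ and $m+1$) computed modulo $n$. $\operatorname{ecc}_G(x)$ is the maximum distance from $x$ to a vertex of $G$. *)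

theory Defs
  imports Main "HOL-Library.Extended_Nat"
begin

text \<open>Vertices are integer lists v = [v_0, ..., v_(m+1)] of length m+2.
  The bucket entries v_0 and v_(m+1) represent elements of Z_n by their
  canonical representatives in {0..<n}; the inner entries range over
  the given digit set D ({0,1} for Yoke, {-1,0,1} for dYoke).\<close>

definition yoke_verts :: "int set \<Rightarrow> nat \<Rightarrow> nat \<Rightarrow> int list set" where
  "yoke_verts D n m = {v. length v = m + 2
      \<and> 0 \<le> v ! 0 \<and> v ! 0 < int n
      \<and> 0 \<le> v ! (m+1) \<and> v ! (m+1) < int n
      \<and> (\<forall>i. 1 \<le> i \<and> i \<le> m \<longrightarrow> v ! i \<in> D)
      \<and> sum_list v mod int n = 0}"

definition coord_add :: "nat \<Rightarrow> nat \<Rightarrow> nat \<Rightarrow> int \<Rightarrow> int \<Rightarrow> int" where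
  "coord_add n m j x d = (if j = 0 \<or> j = m + 1 then (x + d) mod int n else x + d)"

definition yoke_adj :: "int set \<Rightarrow> nat \<Rightarrow> nat \<Rightarrow> int list \<Rightarrow> int list \<Rightarrow> bool" where
  "yoke_adj D n m u v \<longleftrightarrow> u \<in> yoke_verts D n m \<and> v \<in> yoke_verts D n m \<and> u \<noteq> v \<and>
     (\<exists>i \<le> m. (\<forall>j < m + 2. j \<noteq> i \<and> j \<noteq> i + 1 \<longrightarrow> u ! j = v ! j) \<and>
        (\<exists>d \<in> {1, -1}. u ! i = coord_add n m i (v ! i) d
                     \<and> u ! (i+1) = coord_add n m (i+1) (v ! (i+1)) (- d)))"

definition gdist :: "('a \<Rightarrow> 'a \<Rightarrow> bool) \<Rightarrow> 'a \<Rightarrow> 'a \<Rightarrow> enat" where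
  "gdist E u v = Inf {enat (length p - 1) | p. p \<noteq> [] \<and> hd p = u \<and> last p = v \<and> successively E p}"

definition ecc :: "'a set \<Rightarrow> ('a \<Rightarrow> 'a \<Rightarrow> bool) \<Rightarrow> 'a \<Rightarrow> enat" where
  "ecc V E x = Sup {gdist E x v | v. v \<in> V}"

definition diam :: "'a set \<Rightarrow> ('a \<Rightarrow> 'a \<Rightarrow> bool) \<Rightarrow> enat" where
  "diam V E = Sup {gdist E u v | u v. u \<in> V \<and> v \<in> V}"

abbreviation Yoke_V where "Yoke_V n m \<equiv> yoke_verts {0, 1} n m"
abbreviation Yoke_E where "Yoke_E n m \<equiv> yoke_adj {0, 1} n m"
abbreviation dYoke_V where "dYoke_V n m \<equiv> yoke_verts {-1, 0, 1} n m"
abbreviation dYoke_E where "dYoke_E n m \<equiv> yoke_adj {-1, 0, 1} n m"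

end

theory Submission
  imports Defs
begin

text \<open>Record a sequence of moves by the net number f i of units carried across the edge
  between coordinates i and i+1. Every walk of length k from x to y gives such a flow f with
  y = x + (net inflow of f) and l1-norm at most k. Conversely, if the inner digits range over
  an integer interval with at least two elements, any nonzero flow between two vertices has an
  edge along which one unit can be moved without leaving the vertex set, so the distance is the
  least l1-norm of a flow from x to y. Whether f carries u to v depends only on v - u, so
  d_Y(u, v) = d_Z(0, v - u), and the differences of Yoke vertices are exactly the dYoke vertices.\<close>

lemma gdist_le_walk:
  assumes "p \<noteq> []" "hd p = x" "last p = y" "successively E p"
  shows "gdist E x y \<le> enat (length p - 1)"
  unfolding gdist_def using assms by (blast intro: Inf_lower)

lemma gdist_refl: "gdist E x x = 0"
  using gdist_le_walk[of "[x]" x x E] by (simp add: zero_enat_def[symmetric])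

lemma gdist_obtain_walk:
  assumes "gdist E x y \<noteq> \<infinity>"
  obtains p where "p \<noteq> []" "hd p = x" "last p = y" "successively E p"
    "gdist E x y = enat (length p - 1)"
proof -
  let ?W = "{enat (length p - 1) | p. p \<noteq> [] \<and> hd p = x \<and> last p = y \<and> successively E p}"
  have "?W \<noteq> {}" using assms by (auto simp: gdist_def top_enat_def[symmetric])
  then obtain w where "w \<in> ?W" by blast
  then have "Inf ?W \<in> ?W" by (rule wellorder_InfI)
  then show ?thesis using that unfolding gdist_def by blast
qed

lemma gdist_le_adj_plus_1:
  assumes "E x z"
  shows "gdist E x y \<le> gdist E z y + 1"
proof (cases "gdist E z y = \<infinity>")
  case False
  then obtain p where p: "p \<noteq> []" "hd p = z" "last p = y" "successively E p"
    "gdist E z y = enat (length p - 1)" by (rule gdist_obtain_walk)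
  have "gdist E x y \<le> enat (length (x # p) - 1)"
    using p(1-4) assms by (intro gdist_le_walk) (auto simp: successively_Cons neq_Nil_conv)
  also have "\<dots> = gdist E z y + 1" using p(1,5) by (simp add: one_enat_def)
  finally show ?thesis .
qed simp

lemma yoke_verts_length: "x \<in> yoke_verts D n m \<Longrightarrow> length x = m + 2"
  by (simp add: yoke_verts_def)

lemma yoke_verts_digit: "x \<in> yoke_verts D n m \<Longrightarrow> 1 \<le> j \<Longrightarrow> j \<le> m \<Longrightarrow> x ! j \<in> D"
  by (simp add: yoke_verts_def)

lemma yoke_verts_bucket:
  "x \<in> yoke_verts D n m \<Longrightarrow> j = 0 \<or> j = m + 1 \<Longrightarrow> 0 \<le> x ! j \<and> x ! j < int n"
  by (auto simp: yoke_verts_def)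

lemma yoke_verts_pos: "x \<in> yoke_verts D n m \<Longrightarrow> 0 < n"
  using yoke_verts_bucket[of x D n m 0] by simp

lemma coord_add_add: "coord_add n m j (coord_add n m j x a) b = coord_add n m j x (a + b)"
  by (simp add: coord_add_def mod_add_left_eq add.assoc)

lemma coord_add_0:
  assumes "x \<in> yoke_verts D n m" "j < m + 2"
  shows "coord_add n m j (x ! j) 0 = x ! j"
  using assms by (auto simp: coord_add_def yoke_verts_def)

lemma sum_list_mod_cong:
  fixes N :: int
  assumes "length z = k" "length x = k" "\<forall>j<k. z ! j mod N = (x ! j + c j) mod N"
  shows "sum_list z mod N = (sum_list x + (\<Sum>j<k. c j)) mod N"
proof -
  have "sum_list z mod N = (\<Sum>j<k. z ! j mod N) mod N"
    using assms(1) by (simp add: sum_list_sum_nth atLeast0LessThan mod_sum_eq)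
  also have "\<dots> = (\<Sum>j<k. (x ! j + c j) mod N) mod N" using assms(3) by simp
  also have "\<dots> = (sum_list x + (\<Sum>j<k. c j)) mod N"
    using assms(2) by (simp add: sum_list_sum_nth atLeast0LessThan sum.distrib mod_sum_eq)
  finally show ?thesis .
qed

definition net_inflow :: "nat \<Rightarrow> (nat \<Rightarrow> int) \<Rightarrow> nat \<Rightarrow> int" where
  "net_inflow m f j = (if j = 0 then 0 else f (j - 1)) - (if j \<le> m then f j else 0)"

definition apply_flow :: "nat \<Rightarrow> nat \<Rightarrow> int list \<Rightarrow> (nat \<Rightarrow> int) \<Rightarrow> int list" where
  "apply_flow n m x f = map (\<lambda>j. coord_add n m j (x ! j) (net_inflow m f j)) [0..<m+2]"

definition flow_size :: "nat \<Rightarrow> (nat \<Rightarrow> int) \<Rightarrow> nat" where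
  "flow_size m f = (\<Sum>i\<le>m. nat \<bar>f i\<bar>)"

definition unit_flow :: "nat \<Rightarrow> int \<Rightarrow> nat \<Rightarrow> int" where
  "unit_flow i d = (\<lambda>k. if k = i then d else 0)"

lemma length_apply_flow [simp]: "length (apply_flow n m x f) = m + 2"
  by (simp add: apply_flow_def)

lemma nth_apply_flow:
  "j < m + 2 \<Longrightarrow> apply_flow n m x f ! j = coord_add n m j (x ! j) (net_inflow m f j)"
  by (simp add: apply_flow_def del: upt_Suc)

lemma nth_apply_flow_inner:
  "1 \<le> j \<Longrightarrow> j \<le> m \<Longrightarrow> apply_flow n m x f ! j = x ! j + f (j - 1) - f j"
  by (simp add: nth_apply_flow coord_add_def net_inflow_def)

lemma net_inflow_add: "net_inflow m (\<lambda>i. f i + g i) j = net_inflow m f j + net_inflow m g j"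
  by (simp add: net_inflow_def)

lemma apply_flow_apply_flow:
  "apply_flow n m (apply_flow n m x f) g = apply_flow n m x (\<lambda>i. f i + g i)"
  by (rule nth_equalityI) (simp_all add: nth_apply_flow coord_add_add net_inflow_add)

lemma flow_size_eq_0_iff: "flow_size m f = 0 \<longleftrightarrow> (\<forall>i\<le>m. f i = 0)"
  by (auto simp: flow_size_def)

lemma apply_flow_size_0:
  assumes "x \<in> yoke_verts D n m" "flow_size m f = 0"
  shows "apply_flow n m x f = x"
  using assms
  by (intro nth_equalityI) (auto simp: yoke_verts_length nth_apply_flow net_inflow_def
      flow_size_eq_0_iff coord_add_0)

lemma sum_net_inflow: "(\<Sum>j<m+2. net_inflow m f j) = 0"
proof -
  have "(\<Sum>j<Suc (m+1). if j = 0 then 0 else f (j - 1)) = (\<Sum>j\<le>m. f j)"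
    unfolding sum.lessThan_Suc_shift by (simp add: lessThan_Suc_atMost)
  moreover have "(\<Sum>j<m+2. if j \<le> m then f j else 0) = (\<Sum>j\<le>m. f j)"
    by (simp add: lessThan_Suc_atMost)
  ultimately show ?thesis by (simp add: net_inflow_def sum_subtractf)
qed

lemma apply_flow_in_yoke_verts:
  assumes x: "x \<in> yoke_verts D n m"
    and digits: "\<And>j. 1 \<le> j \<Longrightarrow> j \<le> m \<Longrightarrow> apply_flow n m x f ! j \<in> D"
  shows "apply_flow n m x f \<in> yoke_verts D n m"
proof -
  have "n > 0" using yoke_verts_pos[OF x] .
  have "sum_list (apply_flow n m x f) mod int n
      = (sum_list x + (\<Sum>j<m+2. net_inflow m f j)) mod int n"
    by (rule sum_list_mod_cong[OF _ yoke_verts_length[OF x]]) (auto simp: nth_apply_flow coord_add_def)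
  then have "sum_list (apply_flow n m x f) mod int n = 0"
    using x unfolding sum_net_inflow by (simp add: yoke_verts_def)
  then show ?thesis
    using digits \<open>n > 0\<close> by (auto simp: yoke_verts_def nth_apply_flow coord_add_def)
qed

lemma net_inflow_unit_flow:
  "i \<le> m \<Longrightarrow>
    net_inflow m (unit_flow i d) j = (if j = i + 1 then d else 0) - (if j = i then d else 0)"
  by (auto simp: net_inflow_def unit_flow_def)

lemma flow_size_unit_flow: "i \<le> m \<Longrightarrow> d \<in> {1, -1} \<Longrightarrow> flow_size m (unit_flow i d) = 1"
  by (auto simp: flow_size_def unit_flow_def if_distrib sum.delta cong: if_cong)

lemma flow_size_add_le: "flow_size m (\<lambda>i. f i + g i) \<le> flow_size m f + flow_size m g"
  unfolding flow_size_def sum.distrib[symmetric] by (intro sum_mono) linarith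

lemma flow_size_diff_unit_flow:
  assumes "i \<le> m" "d \<in> {1, -1}" "d * f i > 0"
  shows "flow_size m (\<lambda>k. f k - unit_flow i d k) + 1 = flow_size m f"
proof -
  have "nat \<bar>f k\<bar> = nat \<bar>f k - unit_flow i d k\<bar> + (if k = i then 1 else 0)" for k
    using assms(2,3) by (auto simp: unit_flow_def zero_less_mult_iff)
  then show ?thesis using assms(1) by (simp add: flow_size_def sum.distrib)
qed

lemma yoke_adj_imp_unit_flow:
  assumes "yoke_adj D n m x y"
  obtains i d where "i \<le> m" "d \<in> {1, -1}" "y = apply_flow n m x (unit_flow i d)"
proof -
  have y: "y \<in> yoke_verts D n m" using assms by (simp add: yoke_adj_def)
  obtain i d where i: "i \<le> m" and d: "d \<in> {1, -1}"
    and same: "\<forall>j < m + 2. j \<noteq> i \<and> j \<noteq> i + 1 \<longrightarrow> x ! j = y ! j"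
    and moved: "x ! i = coord_add n m i (y ! i) d"
      "x ! (i+1) = coord_add n m (i+1) (y ! (i+1)) (- d)"
    using assms unfolding yoke_adj_def by blast
  have "y ! j = coord_add n m j (x ! j) (net_inflow m (unit_flow i d) j)" if "j < m + 2" for j
    using that i same moved coord_add_0[OF y that]
    by (auto simp: net_inflow_unit_flow coord_add_add)
  then have "y = apply_flow n m x (unit_flow i d)"
    using yoke_verts_length[OF y] by (intro nth_equalityI) (simp_all add: nth_apply_flow)
  with i d show ?thesis by (rule that)
qed

lemma unit_flow_step:
  assumes x: "x \<in> yoke_verts D n m" and i: "i \<le> m" and d: "d \<in> {1, -1}"
    and low: "i = 0 \<or> x ! i - d \<in> D" and high: "i = m \<or> x ! (i+1) + d \<in> D"
  defines "z \<equiv> apply_flow n m x (unit_flow i d)"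
  shows "z \<in> yoke_verts D n m" and "z = x \<or> yoke_adj D n m x z"
proof -
  have "z ! j = x ! j + (if j = i + 1 then d else 0) - (if j = i then d else 0)"
    if "1 \<le> j" "j \<le> m" for j
    using that i by (auto simp: z_def nth_apply_flow_inner unit_flow_def)
  then show z: "z \<in> yoke_verts D n m"
    unfolding z_def using x low high yoke_verts_digit[OF x]
    by (intro apply_flow_in_yoke_verts) (auto simp: z_def)
  have "yoke_adj D n m x z" if "z \<noteq> x"
    unfolding yoke_adj_def
  proof (intro conjI exI[of _ i])
    show "\<forall>j<m + 2. j \<noteq> i \<and> j \<noteq> i + 1 \<longrightarrow> x ! j = z ! j"
      using i coord_add_0[OF x] by (simp add: z_def nth_apply_flow net_inflow_unit_flow)
    have "x ! j = coord_add n m j (z ! j) (if j = i then d else - d)" if "j = i \<or> j = i + 1" for j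
      using that i coord_add_0[OF x, of j]
      by (auto simp: z_def nth_apply_flow net_inflow_unit_flow coord_add_add)
    then show "\<exists>d\<in>{1, - 1}. x ! i = coord_add n m i (z ! i) d \<and>
        x ! (i + 1) = coord_add n m (i + 1) (z ! (i + 1)) (- d)"
      using d by fastforce
  qed (use x z i that in auto)
  then show "z = x \<or> yoke_adj D n m x z" by blast
qed

lemma flow_of_walk:
  assumes "successively (yoke_adj D n m) p" "p \<noteq> []" "hd p = x" "x \<in> yoke_verts D n m"
  obtains f where "apply_flow n m x f = last p" "flow_size m f \<le> length p - 1"
  using assms
proof (induction p arbitrary: x thesis)
  case (Cons x' p)
  show ?case
  proof (cases p)
    case Nil
    then show ?thesis
      using Cons.prems(1)[of "\<lambda>_. 0"] Cons.prems(4,5) by (simp add: apply_flow_size_0 flow_size_def)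
  next
    case (Cons y p')
    have xy: "yoke_adj D n m x y" and walk: "successively (yoke_adj D n m) p"
      using Cons.prems \<open>p = y # p'\<close> by auto
    then have "y \<in> yoke_verts D n m" by (simp add: yoke_adj_def)
    then obtain g where g: "apply_flow n m y g = last p" "flow_size m g \<le> length p - 1"
      using Cons.IH[OF _ walk] \<open>p = y # p'\<close> by auto
    obtain i d where i: "i \<le> m" "d \<in> {1, -1}" "y = apply_flow n m x (unit_flow i d)"
      using yoke_adj_imp_unit_flow[OF xy] .
    have "apply_flow n m x (\<lambda>k. unit_flow i d k + g k) = last (x' # p)"
      using g(1) i(3) \<open>p = y # p'\<close> by (simp add: apply_flow_apply_flow)
    moreover have "flow_size m (\<lambda>k. unit_flow i d k + g k) \<le> length (x' # p) - 1"
      using flow_size_add_le[of m "unit_flow i d" g] flow_size_unit_flow[OF i(1,2)] g(2)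
        \<open>p = y # p'\<close> by simp
    ultimately show ?thesis by (rule Cons.prems(1))
  qed
qed simp

lemma exists_admissible_unit_step:
  fixes a b :: int
  assumes "a < b" and x: "x \<in> yoke_verts {a..b} n m"
    and y: "apply_flow n m x f \<in> yoke_verts {a..b} n m"
    and d: "d \<in> {1, -1}" and e: "e \<le> m" "d * f e > 0"
  shows "\<exists>i\<le>m. d * f i > 0 \<and> (i = 0 \<or> x ! i - d \<in> {a..b})
                 \<and> (i = m \<or> x ! (i+1) + d \<in> {a..b})"
proof -
  have digits: "x ! j \<in> {a..b}" "x ! j + f (j - 1) - f j \<in> {a..b}" if "1 \<le> j" "j \<le> m" for j
    using yoke_verts_digit[OF x that] yoke_verts_digit[OF y that] nth_apply_flow_inner[OF that]
    by auto
  \<comment> \<open>At the leftmost edge carrying flow in direction d the tail coordinate moves by -d,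
    so it can give a unit; at the rightmost such edge i, a head coordinate unable to take a unit
    would force edge i+1 to carry at least as much.\<close>
  define S where "S = {i. i \<le> m \<and> d * f i > 0 \<and> (i = 0 \<or> x ! i - d \<in> {a..b})}"
  define i0 where "i0 = (LEAST i. i \<le> m \<and> d * f i > 0)"
  have i0: "i0 \<le> m \<and> d * f i0 > 0"
    unfolding i0_def using e by (intro LeastI) blast
  have "i0 \<in> S"
  proof (cases "i0 = 0")
    case False
    have "\<not> (i0 - 1 \<le> m \<and> d * f (i0 - 1) > 0)"
      unfolding i0_def by (rule not_less_Least) (use False i0_def in simp)
    then have "x ! i0 - d \<in> {a..b}"
      using digits[of i0] i0 False d by (auto simp: zero_less_mult_iff)
    then show ?thesis using i0 by (simp add: S_def)
  qed (use i0 in \<open>simp add: S_def\<close>)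
  have "finite S" unfolding S_def by (rule finite_subset[of _ "{..m}"]) auto
  define i where "i = Max S"
  have iS: "i \<in> S" unfolding i_def using \<open>finite S\<close> \<open>i0 \<in> S\<close> by (intro Max_in) auto
  have "i = m \<or> x ! (i+1) + d \<in> {a..b}"
  proof (rule ccontr)
    assume "\<not> (i = m \<or> x ! (i+1) + d \<in> {a..b})"
    then have "i < m" and "x ! (i+1) + d \<notin> {a..b}" using iS by (auto simp: S_def)
    then have "d * f (i+1) > 0" and "x ! (i+1) - d \<in> {a..b}"
      using digits[of "i+1"] iS d \<open>a < b\<close> by (auto simp: S_def zero_less_mult_iff)
    then have "i + 1 \<in> S" using \<open>i < m\<close> by (simp add: S_def)
    then show False using Max_ge[OF \<open>finite S\<close>] i_def by fastforce
  qed
  then show ?thesis using iS by (auto simp: S_def)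
qed

lemma gdist_le_flow_size:
  fixes a b :: int
  assumes "a < b" "x \<in> yoke_verts {a..b} n m" "apply_flow n m x f \<in> yoke_verts {a..b} n m"
  shows "gdist (yoke_adj {a..b} n m) x (apply_flow n m x f) \<le> enat (flow_size m f)"
  using assms(2,3)
proof (induction "flow_size m f" arbitrary: x f)
  case 0
  then show ?case by (simp add: apply_flow_size_0 gdist_refl)
next
  case (Suc k)
  let ?E = "yoke_adj {a..b} n m" and ?y = "apply_flow n m x f"
  obtain e where e: "e \<le> m" "f e \<noteq> 0"
    using flow_size_eq_0_iff[of m f] Suc.hyps(2) by auto
  define d where "d = sgn (f e)"
  have d: "d \<in> {1, -1}" "d * f e > 0"
    using e(2) by (auto simp: d_def sgn_if)
  obtain i where i: "i \<le> m" "d * f i > 0"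
    and low: "i = 0 \<or> x ! i - d \<in> {a..b}" and high: "i = m \<or> x ! (i+1) + d \<in> {a..b}"
    using exists_admissible_unit_step[OF assms(1) Suc.prems d(1) e(1) d(2)] by blast
  define z where "z = apply_flow n m x (unit_flow i d)"
  define g where "g = (\<lambda>k. f k - unit_flow i d k)"
  have z: "z \<in> yoke_verts {a..b} n m" "z = x \<or> ?E x z"
    using unit_flow_step[OF Suc.prems(1) i(1) d(1) low high] by (simp_all add: z_def)
  have "apply_flow n m z g = ?y"
    by (simp add: z_def g_def apply_flow_apply_flow)
  moreover have "flow_size m g = k"
    using flow_size_diff_unit_flow[of i m d f, OF i(1) d(1) i(2)] Suc.hyps(2) by (simp add: g_def)
  ultimately have "gdist ?E z ?y \<le> enat k"
    using Suc.hyps(1)[of g z] z(1) Suc.prems(2) by simp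
  have "gdist ?E x ?y \<le> gdist ?E z ?y + 1"
    using z(2) gdist_le_adj_plus_1[of ?E x z ?y] by auto
  also have "\<dots> \<le> enat k + 1"
    using \<open>gdist ?E z ?y \<le> enat k\<close> by (rule add_right_mono)
  finally show ?case
    using Suc.hyps(2) by (simp add: one_enat_def)
qed

lemma gdist_eq_INF_flow_size:
  fixes a b :: int
  assumes "a < b" "x \<in> yoke_verts {a..b} n m" "y \<in> yoke_verts {a..b} n m"
  shows "gdist (yoke_adj {a..b} n m) x y = (INF f\<in>{f. apply_flow n m x f = y}. enat (flow_size m f))"
proof (rule antisym)
  show "gdist (yoke_adj {a..b} n m) x y \<le> (INF f\<in>{f. apply_flow n m x f = y}. enat (flow_size m f))"
    using gdist_le_flow_size[OF assms(1,2)] assms(3) by (auto intro: INF_greatest)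
  show "(INF f\<in>{f. apply_flow n m x f = y}. enat (flow_size m f)) \<le> gdist (yoke_adj {a..b} n m) x y"
  proof (cases "gdist (yoke_adj {a..b} n m) x y = \<infinity>")
    case False
    then obtain p where p: "p \<noteq> []" "hd p = x" "last p = y" "successively (yoke_adj {a..b} n m) p"
      "gdist (yoke_adj {a..b} n m) x y = enat (length p - 1)" by (rule gdist_obtain_walk)
    obtain f where "apply_flow n m x f = y" "flow_size m f \<le> length p - 1"
      using flow_of_walk[OF p(4,1,2) assms(2)] p(3) by metis
    then show ?thesis using p(5) by (auto intro: INF_lower2)
  qed simp
qed

definition vertex_diff :: "nat \<Rightarrow> nat \<Rightarrow> int list \<Rightarrow> int list \<Rightarrow> int list" where
  "vertex_diff n m u v = map (\<lambda>j. coord_add n m j (v ! j - u ! j) 0) [0..<m+2]"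

lemma length_vertex_diff [simp]: "length (vertex_diff n m u v) = m + 2"
  by (simp add: vertex_diff_def)

lemma nth_vertex_diff: "j < m + 2 \<Longrightarrow> vertex_diff n m u v ! j = coord_add n m j (v ! j - u ! j) 0"
  by (simp add: vertex_diff_def del: upt_Suc)

lemma mod_add_eq_iff:
  fixes N u a v :: int
  assumes "0 \<le> v" "v < N"
  shows "(u + a) mod N = v \<longleftrightarrow> a mod N = (v - u) mod N"
proof -
  have "(u + a) mod N = v \<longleftrightarrow> (u + a) mod N = v mod N" using assms by simp
  also have "\<dots> \<longleftrightarrow> a mod N = (v - u) mod N"
    unfolding mod_eq_dvd_iff by (simp add: algebra_simps)
  finally show ?thesis .
qed

lemma apply_flow_eq_iff_vertex_diff:
  assumes v: "v \<in> yoke_verts D n m"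
  shows "apply_flow n m u f = v \<longleftrightarrow> apply_flow n m (replicate (m+2) 0) f = vertex_diff n m u v"
proof -
  have "coord_add n m j (u ! j) a = v ! j
          \<longleftrightarrow> coord_add n m j 0 a = coord_add n m j (v ! j - u ! j) 0"
    if "j < m + 2" for j a
    using yoke_verts_bucket[OF v, of j] mod_add_eq_iff[of "v ! j" "int n" "u ! j" a]
    by (auto simp: coord_add_def)
  then show ?thesis using yoke_verts_length[OF v]
    by (auto simp: list_eq_iff_nth_eq nth_apply_flow nth_vertex_diff nth_append
        simp del: replicate.simps replicate_Suc)
qed

lemma replicate_0_in_yoke_verts: "0 < n \<Longrightarrow> 0 \<in> D \<Longrightarrow> replicate (m+2) 0 \<in> yoke_verts D n m"
  by (auto simp: yoke_verts_def sum_list_replicate simp del: replicate.simps replicate_Suc)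

lemma vertex_diff_in_dYoke_V:
  assumes u: "u \<in> Yoke_V n m" and v: "v \<in> Yoke_V n m"
  shows "vertex_diff n m u v \<in> dYoke_V n m"
proof -
  have "n > 0" using yoke_verts_pos[OF u] .
  have "sum_list (vertex_diff n m u v) mod int n = (sum_list v + (\<Sum>j<m+2. - (u ! j))) mod int n"
    by (rule sum_list_mod_cong[OF _ yoke_verts_length[OF v]]) (auto simp: nth_vertex_diff coord_add_def)
  also have "(\<Sum>j<m+2. - (u ! j)) = - sum_list u"
    using yoke_verts_length[OF u] by (simp add: sum_list_sum_nth atLeast0LessThan sum_negf)
  finally have "sum_list (vertex_diff n m u v) mod int n
      = (sum_list v mod int n - sum_list u mod int n) mod int n"
    by (simp add: mod_diff_eq)
  moreover have "vertex_diff n m u v ! j \<in> {-1, 0, 1}" if "1 \<le> j" "j \<le> m" for j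
    using that yoke_verts_digit[OF u that] yoke_verts_digit[OF v that]
    by (auto simp: nth_vertex_diff coord_add_def)
  ultimately show ?thesis
    using u v \<open>n > 0\<close> by (auto simp: yoke_verts_def nth_vertex_diff coord_add_def)
qed

lemma dYoke_V_obtain_vertex_diff:
  assumes w: "w \<in> dYoke_V n m"
  obtains u v where "u \<in> Yoke_V n m" "v \<in> Yoke_V n m" "vertex_diff n m u v = w"
proof -
  have "n > 0" using yoke_verts_pos[OF w] .
  \<comment> \<open>u has inner digit 1 exactly where w has -1; its first bucket fixes the digit sum.\<close>
  define t where "t j = (if 1 \<le> j \<and> j \<le> m \<and> w ! j = -1 then 1 else (0::int))" for j
  define u where "u = map (\<lambda>j. if j = 0 then (- (\<Sum>k<m+2. t k)) mod int n else t j) [0..<m+2]"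
  define v where "v = map (\<lambda>j. coord_add n m j (u ! j) (w ! j)) [0..<m+2]"
  have length_uv: "length u = m + 2" "length v = m + 2" by (simp_all add: u_def v_def)
  have nth_u: "u ! j = (if j = 0 then (- (\<Sum>k<m+2. t k)) mod int n else t j)" if "j < m + 2" for j
    using that by (simp add: u_def del: upt_Suc)
  have nth_v: "v ! j = coord_add n m j (u ! j) (w ! j)" if "j < m + 2" for j
    using that by (simp add: v_def del: upt_Suc)
  have "sum_list u mod int n
      = (sum_list (map t [0..<m+2]) + (\<Sum>j<m+2. if j = 0 then - (\<Sum>k<m+2. t k) else 0)) mod int n"
    by (rule sum_list_mod_cong) (auto simp: u_def nth_u t_def mod_add_right_eq simp del: upt_Suc)
  then have sum_u: "sum_list u mod int n = 0"
    by (simp add: sum_list_sum_nth atLeast0LessThan del: upt_Suc)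
  then have u: "u \<in> Yoke_V n m"
    using \<open>n > 0\<close> length_uv by (auto simp: yoke_verts_def nth_u t_def)
  have "sum_list v mod int n = (sum_list u + (\<Sum>j<m+2. w ! j)) mod int n"
    by (rule sum_list_mod_cong)
      (auto simp: length_uv yoke_verts_length[OF w] nth_v coord_add_def mod_add_right_eq)
  also have "\<dots> = (sum_list u mod int n + sum_list w mod int n) mod int n"
    using yoke_verts_length[OF w] by (simp add: sum_list_sum_nth atLeast0LessThan mod_add_eq)
  finally have "sum_list v mod int n = 0"
    using sum_u w by (simp add: yoke_verts_def)
  then have v: "v \<in> Yoke_V n m"
    using \<open>n > 0\<close> length_uv yoke_verts_digit[OF w]
    by (fastforce simp: yoke_verts_def nth_v nth_u t_def coord_add_def)
  have "vertex_diff n m u v = w"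
  proof (rule nth_equalityI)
    fix j assume "j < length (vertex_diff n m u v)"
    then have "j < m + 2" by simp
    then show "vertex_diff n m u v ! j = w ! j"
      using yoke_verts_bucket[OF w, of j]
      by (auto simp: nth_vertex_diff nth_v coord_add_def mod_diff_left_eq)
  qed (simp add: yoke_verts_length[OF w])
  with u v show ?thesis by (rule that)
qed

lemma gdist_Yoke_eq_gdist_dYoke:
  assumes u: "u \<in> Yoke_V n m" and v: "v \<in> Yoke_V n m"
  shows "gdist (Yoke_E n m) u v = gdist (dYoke_E n m) (replicate (m+2) 0) (vertex_diff n m u v)"
proof -
  have "n > 0" using yoke_verts_pos[OF u] .
  have Y: "{0, 1} = {0..1::int}" and Z: "{-1, 0, 1} = {-1..1::int}" by auto
  have "gdist (Yoke_E n m) u v = (INF f\<in>{f. apply_flow n m u f = v}. enat (flow_size m f))"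
    using u v unfolding Y by (intro gdist_eq_INF_flow_size) simp_all
  also have "{f. apply_flow n m u f = v}
      = {f. apply_flow n m (replicate (m+2) 0) f = vertex_diff n m u v}"
    using apply_flow_eq_iff_vertex_diff[OF v] by blast
  also have "(INF f\<in>\<dots>. enat (flow_size m f))
      = gdist (dYoke_E n m) (replicate (m+2) 0) (vertex_diff n m u v)"
    using replicate_0_in_yoke_verts[OF \<open>n > 0\<close>] vertex_diff_in_dYoke_V[OF u v]
    unfolding Z by (intro gdist_eq_INF_flow_size[symmetric]) simp_all
  finally show ?thesis .
qed

theorem theorem5p22:
  fixes n m :: nat
  assumes "n \<ge> 1"
  shows "diam (Yoke_V n m) (Yoke_E n m) = ecc (dYoke_V n m) (dYoke_E n m) (replicate (m + 2) 0)"
proof -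
  have "{gdist (Yoke_E n m) u v | u v. u \<in> Yoke_V n m \<and> v \<in> Yoke_V n m}
      = {gdist (dYoke_E n m) (replicate (m + 2) 0) w | w. w \<in> dYoke_V n m}" (is "?Y = ?Z")
  proof
    show "?Y \<subseteq> ?Z"
      using gdist_Yoke_eq_gdist_dYoke vertex_diff_in_dYoke_V by blast
    show "?Z \<subseteq> ?Y"
      by (force elim: dYoke_V_obtain_vertex_diff simp: gdist_Yoke_eq_gdist_dYoke)
  qed
  then show ?thesis by (simp add: diam_def ecc_def)
qed

end
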